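(* Let $G$ be an ST graph. An arc $v\to w$ of $G$ is disimplicial in $G$ if and only if $\mathrm{repr}(v)\to\mathrm{repr}(w)$ is disimplicial in $\mathrm{Repr}(G)$.
   Context: A digraph $G$ is a finite set $V(G)$ with $E(G)\subseteq V(G)\times V(G)$. $N^+(v)$, $N^-(v)$ are the out- and in-neighborhoods and $N(v)=N^+(v)\cup N^-(v)$. A source has $N^-(v)=\emptyset$, a sink has $N^+(v)=\emptyset$; $G$ is an ST graph if every vertex is a source or a sink. An arc $v\to w$ is disimplicial if $x\to y$ is an arc for all $x\in N^-(w)$, $y\in N^+(v)$. Two vertices $v,w$ of an ST graph are twins when $N(v)=N(w)$; a twin block is a maximal set of pairwise twin vertices (the blocks partition $V(G)$). A function $\mathrm{repr}$ selects one vertex $\mathrm{repr}(B)\in B$ of each block $B$, and $\mathrm{repr}(v)=\mathrm{repr}(B)$ for $v\in B$. The twin reduction $\mathrm{Repr}(G)$ is the subdigraph of $G$ induced by $\{\mathrm{repr}(B): B \text{ a twin block}\}$. *)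

theory Defs
  imports Main
begin

definition digraph :: "'a set \<Rightarrow> ('a \<times> 'a) set \<Rightarrow> bool" where
  "digraph V E \<longleftrightarrow> finite V \<and> E \<subseteq> V \<times> V"

definition out_nbhd :: "('a \<times> 'a) set \<Rightarrow> 'a \<Rightarrow> 'a set" where
  "out_nbhd E v = {w. (v, w) \<in> E}"

definition in_nbhd :: "('a \<times> 'a) set \<Rightarrow> 'a \<Rightarrow> 'a set" where
  "in_nbhd E v = {u. (u, v) \<in> E}"

definition nbhd :: "('a \<times> 'a) set \<Rightarrow> 'a \<Rightarrow> 'a set" where
  "nbhd E v = out_nbhd E v \<union> in_nbhd E v"

definition is_source :: "('a \<times> 'a) set \<Rightarrow> 'a \<Rightarrow> bool" where
  "is_source E v \<longleftrightarrow> in_nbhd E v = {}"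

definition is_sink :: "('a \<times> 'a) set \<Rightarrow> 'a \<Rightarrow> bool" where
  "is_sink E v \<longleftrightarrow> out_nbhd E v = {}"

definition ST_graph :: "'a set \<Rightarrow> ('a \<times> 'a) set \<Rightarrow> bool" where
  "ST_graph V E \<longleftrightarrow> digraph V E \<and> (\<forall>v\<in>V. is_source E v \<or> is_sink E v)"

definition disimplicial :: "('a \<times> 'a) set \<Rightarrow> 'a \<Rightarrow> 'a \<Rightarrow> bool" where
  "disimplicial E v w \<longleftrightarrow> (v, w) \<in> E \<and>
     (\<forall>x\<in>in_nbhd E w. \<forall>y\<in>out_nbhd E v. (x, y) \<in> E)"

definition twins :: "('a \<times> 'a) set \<Rightarrow> 'a \<Rightarrow> 'a \<Rightarrow> bool" where
  "twins E v w \<longleftrightarrow> nbhd E v = nbhd E w"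

definition twin_block :: "'a set \<Rightarrow> ('a \<times> 'a) set \<Rightarrow> 'a set \<Rightarrow> bool" where
  "twin_block V E B \<longleftrightarrow> B \<subseteq> V \<and> B \<noteq> {} \<and> (\<forall>v\<in>B. \<forall>w\<in>B. twins E v w) \<and>
     (\<forall>B'. B \<subseteq> B' \<and> B' \<subseteq> V \<and> (\<forall>v\<in>B'. \<forall>w\<in>B'. twins E v w) \<longrightarrow> B' = B)"

definition is_repr :: "'a set \<Rightarrow> ('a \<times> 'a) set \<Rightarrow> ('a \<Rightarrow> 'a) \<Rightarrow> bool" where
  "is_repr V E r \<longleftrightarrow> (\<forall>B. twin_block V E B \<longrightarrow> (\<exists>x\<in>B. \<forall>v\<in>B. r v = x))"

definition Repr_V :: "'a set \<Rightarrow> ('a \<Rightarrow> 'a) \<Rightarrow> 'a set" where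
  "Repr_V V r = r ` V"

definition Repr_E :: "'a set \<Rightarrow> ('a \<times> 'a) set \<Rightarrow> ('a \<Rightarrow> 'a) \<Rightarrow> ('a \<times> 'a) set" where
  "Repr_E V E r = E \<inter> (r ` V \<times> r ` V)"

end

theory Submission
  imports Defs
begin

text \<open>In an ST graph every arc goes from a source to a sink, so whenever b is adjacent to a
  vertex a it is adjacent to every twin of a, with the arc in the same direction. Every vertex is
  a twin of its representative, hence arcs between vertices and arcs between their representatives
  correspond, and both conditions defining a disimplicial arc transfer between G and Repr(G).\<close>

lemma twins_sym: "twins E a b \<Longrightarrow> twins E b a"
  by (simp add: twins_def)

lemma ST_graph_arc_source_sink:
  assumes "ST_graph V E" and "(a, b) \<in> E"
  shows "is_source E a" and "is_sink E b"
proof -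
  have "a \<in> V" "b \<in> V" "\<not> is_sink E a" "\<not> is_source E b"
    using assms by (auto simp: ST_graph_def digraph_def is_sink_def is_source_def
        out_nbhd_def in_nbhd_def)
  then show "is_source E a" "is_sink E b"
    using assms(1) by (auto simp: ST_graph_def)
qed

lemma ST_graph_twins_out_arc:
  assumes "ST_graph V E" and "twins E a a'" and "(a, b) \<in> E"
  shows "(a', b) \<in> E"
proof -
  have "b \<in> nbhd E a'"
    using assms(2,3) by (auto simp: twins_def nbhd_def out_nbhd_def)
  moreover have "(b, a') \<notin> E"
    using ST_graph_arc_source_sink[OF assms(1,3)] by (auto simp: is_sink_def out_nbhd_def)
  ultimately show ?thesis
    by (auto simp: nbhd_def out_nbhd_def in_nbhd_def)
qed

lemma ST_graph_twins_in_arc: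
  assumes "ST_graph V E" and "twins E a a'" and "(b, a) \<in> E"
  shows "(b, a') \<in> E"
proof -
  have "b \<in> nbhd E a'"
    using assms(2,3) by (auto simp: twins_def nbhd_def in_nbhd_def)
  moreover have "(a', b) \<notin> E"
    using ST_graph_arc_source_sink[OF assms(1,3)] by (auto simp: is_source_def in_nbhd_def)
  ultimately show ?thesis
    by (auto simp: nbhd_def out_nbhd_def in_nbhd_def)
qed

lemma twin_block_twin_class:
  assumes "v \<in> V"
  shows "twin_block V E {u \<in> V. twins E v u}"
  unfolding twin_block_def
proof (intro conjI allI impI)
  fix B assume B: "{u \<in> V. twins E v u} \<subseteq> B \<and> B \<subseteq> V \<and> (\<forall>a\<in>B. \<forall>b\<in>B. twins E a b)"
  with assms have "v \<in> B" by (auto simp: twins_def)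
  with B show "B = {u \<in> V. twins E v u}" by blast
qed (use assms in \<open>auto simp: twins_def\<close>)

lemma is_repr_twins:
  assumes "is_repr V E r" and "v \<in> V"
  shows "twins E v (r v)"
proof -
  obtain x where "x \<in> {u \<in> V. twins E v u}" and "\<forall>u \<in> {u \<in> V. twins E v u}. r u = x"
    using assms twin_block_twin_class[OF assms(2)] unfolding is_repr_def by blast
  moreover have "v \<in> {u \<in> V. twins E v u}"
    using assms(2) by (simp add: twins_def)
  ultimately show ?thesis by auto
qed

lemma ST_graph_repr_arc_iff:
  assumes "ST_graph V E" and "is_repr V E r" and "x \<in> V"
  shows "(r x, y) \<in> E \<longleftrightarrow> (x, y) \<in> E"
    and "(y, r x) \<in> E \<longleftrightarrow> (y, x) \<in> E"
  using is_repr_twins[OF assms(2,3)] twins_sym[of E x "r x"]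
    ST_graph_twins_out_arc[OF assms(1)] ST_graph_twins_in_arc[OF assms(1)]
  by blast+

theorem proposition7:
  fixes V :: "'a set" and E :: "('a \<times> 'a) set" and r :: "'a \<Rightarrow> 'a"
  assumes "ST_graph V E"
    and "is_repr V E r"
    and "(v, w) \<in> E"
  shows "disimplicial E v w \<longleftrightarrow> disimplicial (Repr_E V E r) (r v) (r w)"
proof -
  have arcs: "E \<subseteq> V \<times> V"
    using assms(1) by (simp add: ST_graph_def digraph_def)
  note repr_arc = ST_graph_repr_arc_iff[OF assms(1,2)]
  have "v \<in> V" "w \<in> V"
    using arcs assms(3) by auto
  show ?thesis
  proof
    assume "disimplicial E v w"
    with \<open>v \<in> V\<close> \<open>w \<in> V\<close> assms(3) show "disimplicial (Repr_E V E r) (r v) (r w)"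
      by (auto simp: disimplicial_def Repr_E_def in_nbhd_def out_nbhd_def repr_arc)
  next
    assume disimp: "disimplicial (Repr_E V E r) (r v) (r w)"
    show "disimplicial E v w"
      unfolding disimplicial_def
    proof (intro conjI ballI)
      fix x y assume "x \<in> in_nbhd E w" and "y \<in> out_nbhd E v"
      then have "(x, w) \<in> E" "(v, y) \<in> E" "x \<in> V" "y \<in> V"
        using arcs by (auto simp: in_nbhd_def out_nbhd_def)
      \<comment> \<open>pass to the representatives of x and y, which are adjacent in Repr(G)\<close>
      with disimp \<open>v \<in> V\<close> \<open>w \<in> V\<close> have "(r x, r y) \<in> E"
        by (auto simp: disimplicial_def Repr_E_def in_nbhd_def out_nbhd_def repr_arc)
      with \<open>x \<in> V\<close> \<open>y \<in> V\<close> show "(x, y) \<in> E"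
        by (simp add: repr_arc)
    qed (rule assms(3))
  qed
qed

end
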